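(* For every $P\in\mathbb P$ the following are equivalent: (1) $P$ is an extreme point of the convex set $E(P)=\{R\in\mathbb P: R(F)=P(F)\ \text{for all } F\in\mathcal F\}$; (2) $P$ satisfies the Blackwell–Dubins property; (3) for all $Q,R\in\mathbb P$ and $\alpha\in(0,1)$, if $P=\alpha Q+(1-\alpha)R$ then $P$ merges with $Q$ and with $R$.
   Context: Let $\Omega=\{0,1\}^{\mathbb N}$; $\omega^t$ is the cylinder of paths agreeing with $\omega$ in the first $t$ coordinates. $\mathcal F$ is the algebra of all finite unions of cylinders. $\Sigma$ is a fixed $\sigma$-algebra containing all cylinders; $\mathbb P$ the set of finitely additive probabilities on $(\Omega,\Sigma)$. $R(E\mid\omega^t)=R(E\cap\omega^t)/R(\omega^t)$ when $R(\omega^t)>0$. $P$ merges with $Q$ if for every $\varepsilon>0$, $\lim_{t\to\infty}Q(\{\omega:\sup_{E\in\Sigma}|P(E\mid\omega^t)-Q(E\mid\omega^t)|>\varepsilon\})=0$ (cylinders with $Q(\omega^t)>0=P(\omega^t)$ counted in the set). $Q\ll P$ means: for every sequence $(E_n)$ in $\Sigma$, $P(E_n)\to0$ implies $Q(E_n)\to0$. $P$ has the Blackwell–Dubins property if $P$ merges with every $Q\in\mathbb P$ with $Q\ll P$. *)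

theory Defs
  imports "HOL-Analysis.Analysis"
begin

type_synonym path = "nat \<Rightarrow> bool"

definition cyl :: "path \<Rightarrow> nat \<Rightarrow> path set" where
  "cyl w t = {w'. \<forall>i<t. w' i = w i}"

definition cylinders :: "path set set" where
  "cylinders = {cyl w t | w t. True}"

definition cyl_alg :: "path set set" where
  "cyl_alg = {\<Union>C | C. finite C \<and> C \<subseteq> cylinders}"

text \<open>Finitely additive probability on (Omega, S), represented as a real-valued set function
  which vanishes outside S (so that equality of probabilities is equality of functions).\<close>
definition fap :: "path set set \<Rightarrow> (path set \<Rightarrow> real) \<Rightarrow> bool" where
  "fap S P \<longleftrightarrow> (\<forall>E. E \<notin> S \<longrightarrow> P E = 0) \<and> (\<forall>E\<in>S. 0 \<le> P E) \<and> P UNIV = 1 \<and>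
     (\<forall>A\<in>S. \<forall>B\<in>S. A \<inter> B = {} \<longrightarrow> P (A \<union> B) = P A + P B)"

definition cond_prob :: "(path set \<Rightarrow> real) \<Rightarrow> path set \<Rightarrow> path \<Rightarrow> nat \<Rightarrow> real" where
  "cond_prob R E w t = R (E \<inter> cyl w t) / R (cyl w t)"

definition merges :: "path set set \<Rightarrow> (path set \<Rightarrow> real) \<Rightarrow> (path set \<Rightarrow> real) \<Rightarrow> bool" where
  "merges S P Q \<longleftrightarrow> (\<forall>\<epsilon>>0. (\<lambda>t. Q {w. Q (cyl w t) > 0 \<and>
        (P (cyl w t) = 0 \<or>
         (SUP E\<in>S. \<bar>cond_prob P E w t - cond_prob Q E w t\<bar>) > \<epsilon>)}) \<longlonglongrightarrow> 0)"

definition abs_cont :: "path set set \<Rightarrow> (path set \<Rightarrow> real) \<Rightarrow> (path set \<Rightarrow> real) \<Rightarrow> bool" where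
  "abs_cont S Q P \<longleftrightarrow> (\<forall>En. (\<forall>n. En n \<in> S) \<longrightarrow>
       (\<lambda>n. P (En n)) \<longlonglongrightarrow> 0 \<longrightarrow> (\<lambda>n. Q (En n)) \<longlonglongrightarrow> 0)"

definition blackwell_dubins :: "path set set \<Rightarrow> (path set \<Rightarrow> real) \<Rightarrow> bool" where
  "blackwell_dubins S P \<longleftrightarrow> (\<forall>Q. fap S Q \<longrightarrow> abs_cont S Q P \<longrightarrow> merges S P Q)"

definition EP :: "path set set \<Rightarrow> (path set \<Rightarrow> real) \<Rightarrow> (path set \<Rightarrow> real) set" where
  "EP S P = {R. fap S R \<and> (\<forall>F\<in>cyl_alg. R F = P F)}"

definition extreme_point :: "(path set \<Rightarrow> real) set \<Rightarrow> (path set \<Rightarrow> real) \<Rightarrow> bool" where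
  "extreme_point C P \<longleftrightarrow> P \<in> C \<and>
     (\<forall>Q\<in>C. \<forall>R\<in>C. \<forall>\<alpha>::real. 0 < \<alpha> \<and> \<alpha> < 1 \<and> P = (\<lambda>E. \<alpha> * Q E + (1 - \<alpha>) * R E)
        \<longrightarrow> Q = P \<and> R = P)"

end

theory Submission
  imports Defs
begin

(*
  (2) => (3): a mixture component Q satisfies Q <= P / a, hence Q << P.
  (3) => (1): if P = a Q + (1 - a) R in E(P), then P merges with Q.  As Q agrees with P on
      every level-t cylinder c, |P E - Q E| is at most eps plus the Q-mass of the cylinders
      where the conditional probabilities differ by more than eps; merging makes this mass
      vanish, so Q = P and then R = P.
  (1) => (2): for a charge mu on S and a level t, let  A_t mu E = sum over the level-t
      cylinders c of mu(c)/P(c) * P(E n c).  If 0 <= mu <= K P, an L2 (martingale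
      variance) argument shows that A_t mu converges uniformly in E; the limit is a charge
      agreeing with mu on F and dominated by K P.  Extremality of P forces any two such
      charges to coincide, so A_t mu -> mu uniformly.  A Q << P is K P-dominated up to a
      charge of small total mass, hence A_t Q -> Q uniformly as well, and a uniform
      approximation bounds the Q-mass of the disagreement cylinders.
*)

subsection \<open>Level-t cylinders\<close>

text \<open>Truncation of a path after t coordinates; its range is a finite set of canonical
  representatives of the level-t cylinders.\<close>

definition trunc :: "nat \<Rightarrow> path \<Rightarrow> path" where
  "trunc t w = (\<lambda>i. if i < t then w i else False)"

definition level :: "nat \<Rightarrow> path set" where
  "level t = range (trunc t)"

lemma cyl_trunc [simp]: "cyl (trunc t w) t = cyl w t"
  by (auto simp: cyl_def trunc_def)

lemma in_own_cyl [simp]: "w \<in> cyl w t"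
  by (auto simp: cyl_def)

lemma trunc_in_level [simp]: "trunc t w \<in> level t"
  by (simp add: level_def)

lemma trunc_trunc: "s \<le> t \<Longrightarrow> trunc s (trunc t w) = trunc s w"
  by (auto simp: trunc_def)

lemma level_rep_unique: "r \<in> level t \<Longrightarrow> w \<in> cyl r t \<Longrightarrow> r = trunc t w"
  by (auto simp: level_def trunc_def cyl_def)

lemma finite_level: "finite (level t)"
proof -
  have "level t \<subseteq> (\<lambda>A i. i \<in> A) ` Pow {..<t}"
  proof
    fix r assume "r \<in> level t"
    then obtain w where r: "r = trunc t w" by (auto simp: level_def)
    have "r = (\<lambda>i. i \<in> {i. i < t \<and> w i})" by (auto simp: r trunc_def)
    then show "r \<in> (\<lambda>A i. i \<in> A) ` Pow {..<t}" by blast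
  qed
  then show ?thesis by (rule finite_subset) auto
qed

lemma level_cyls_disjoint:
  "r \<in> level t \<Longrightarrow> r' \<in> level t \<Longrightarrow> r \<noteq> r' \<Longrightarrow> cyl r t \<inter> cyl r' t = {}"
  using level_rep_unique by blast

lemma disjoint_family_level_cyls: "disjoint_family_on (\<lambda>r. X r \<inter> cyl r t) (level t)"
  unfolding disjoint_family_on_def using level_cyls_disjoint by blast

lemma UN_level_cyls: "(\<Union>r\<in>level t. cyl r t) = UNIV"
  using in_own_cyl cyl_trunc trunc_in_level by blast

lemma cyl_subset_trunc: "s \<le> t \<Longrightarrow> cyl r t \<subseteq> cyl (trunc s r) s"
  by (auto simp: cyl_def trunc_def)

lemma cyl_determined_set: "{w. \<Phi> (cyl w t)} = (\<Union>r\<in>{r\<in>level t. \<Phi> (cyl r t)}. cyl r t)"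
proof (intro equalityI subsetI)
  fix w assume "w \<in> {w. \<Phi> (cyl w t)}"
  then show "w \<in> (\<Union>r\<in>{r\<in>level t. \<Phi> (cyl r t)}. cyl r t)"
    using in_own_cyl[of w t] by (intro UN_I[of "trunc t w"]) auto
next
  fix w assume "w \<in> (\<Union>r\<in>{r\<in>level t. \<Phi> (cyl r t)}. cyl r t)"
  then show "w \<in> {w. \<Phi> (cyl w t)}" using level_rep_unique by fastforce
qed

lemma cyl_in_cyl_alg: "cyl w t \<in> cyl_alg"
  unfolding cyl_alg_def cylinders_def by (intro CollectI exI[of _ "{cyl w t}"]) auto

lemma UNIV_in_cyl_alg: "UNIV \<in> cyl_alg"
  using cyl_in_cyl_alg[of _ 0] by (simp add: cyl_def)

lemma cyl_alg_eventually_fine: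
  assumes "F \<in> cyl_alg"
  shows "\<exists>L. \<forall>t\<ge>L. \<forall>r. cyl r t \<subseteq> F \<or> cyl r t \<inter> F = {}"
proof -
  obtain C where C: "F = \<Union>C" "finite C" "C \<subseteq> cylinders"
    using assms by (auto simp: cyl_alg_def)
  have "\<exists>L. \<forall>t\<ge>L. \<forall>r. cyl r t \<subseteq> \<Union>C \<or> cyl r t \<inter> \<Union>C = {}"
    using C(2,3)
  proof (induction C rule: finite_induct)
    case empty then show ?case by auto
  next
    case (insert c C)
    then obtain L where L: "\<forall>t\<ge>L. \<forall>r. cyl r t \<subseteq> \<Union>C \<or> cyl r t \<inter> \<Union>C = {}" by auto
    from insert obtain w s where c: "c = cyl w s" by (auto simp: cylinders_def)
    have fine_c: "cyl r t \<subseteq> c \<or> cyl r t \<inter> c = {}" if "s \<le> t" for r t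
    proof (cases "cyl r t \<inter> c = {}")
      case False
      then obtain x where "x \<in> cyl r t" "x \<in> cyl w s" using c by auto
      then have "cyl r t \<subseteq> c" using that by (auto simp: c cyl_def)
      then show ?thesis ..
    qed simp
    have "cyl r t \<subseteq> \<Union>(insert c C) \<or> cyl r t \<inter> \<Union>(insert c C) = {}" if "max L s \<le> t" for r t
      using L fine_c[of t r] that by auto
    then show ?case by blast
  qed
  then show ?thesis using C by simp
qed

subsection \<open>Charges on a sigma-algebra containing the cylinders\<close>

definition charge :: "path set set \<Rightarrow> (path set \<Rightarrow> real) \<Rightarrow> bool" where
  "charge S \<mu> \<longleftrightarrow> (\<forall>A\<in>S. \<forall>B\<in>S. A \<inter> B = {} \<longrightarrow> \<mu> (A \<union> B) = \<mu> A + \<mu> B)"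

lemma chargeD: "charge S \<mu> \<Longrightarrow> A \<in> S \<Longrightarrow> B \<in> S \<Longrightarrow> A \<inter> B = {} \<Longrightarrow> \<mu> (A \<union> B) = \<mu> A + \<mu> B"
  unfolding charge_def by blast

lemma charge_scale: "charge S \<mu> \<Longrightarrow> charge S (\<lambda>E. a * \<mu> E)"
  unfolding charge_def by (simp add: distrib_left)

lemma charge_diff: "charge S \<mu> \<Longrightarrow> charge S \<nu> \<Longrightarrow> charge S (\<lambda>E. \<mu> E - \<nu> E)"
  unfolding charge_def by simp

lemma fap_charge: "fap S P \<Longrightarrow> charge S P"
  by (simp add: fap_def charge_def)

lemma fap_nonneg: "fap S P \<Longrightarrow> 0 \<le> P E"
  by (cases "E \<in> S") (auto simp: fap_def)

locale cyl_sigma =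
  fixes S :: "path set set"
  assumes sigma: "sigma_algebra UNIV S"
    and cylinders_sets: "cylinders \<subseteq> S"
begin

sublocale sa: sigma_algebra UNIV S by (rule sigma)

lemma cyl_sets [intro, simp]: "cyl w t \<in> S"
  using cylinders_sets by (auto simp: cylinders_def)

lemma cyl_alg_sets: "F \<in> cyl_alg \<Longrightarrow> F \<in> S"
  using cylinders_sets by (auto simp: cyl_alg_def)

lemma charge_empty: "charge S \<mu> \<Longrightarrow> \<mu> {} = 0"
  using chargeD[of S \<mu> "{}" "{}"] by simp

lemma charge_sum:
  assumes "charge S \<mu>" "finite I" "\<And>i. i \<in> I \<Longrightarrow> A i \<in> S" "disjoint_family_on A I"
  shows "\<mu> (\<Union>i\<in>I. A i) = (\<Sum>i\<in>I. \<mu> (A i))"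
  using assms(2-4)
proof (induction I rule: finite_induct)
  case empty then show ?case using charge_empty[OF assms(1)] by simp
next
  case (insert i I)
  have "A i \<inter> (\<Union>j\<in>I. A j) = {}"
    using insert(2,5) unfolding disjoint_family_on_def by fastforce
  then have "\<mu> (A i \<union> (\<Union>j\<in>I. A j)) = \<mu> (A i) + \<mu> (\<Union>j\<in>I. A j)"
    using insert(1,4) by (intro chargeD[OF assms(1)]) auto
  moreover have "disjoint_family_on A I"
    using insert(5) by (rule disjoint_family_on_mono[rotated]) auto
  ultimately show ?case using insert by simp
qed

lemma charge_level_sum:
  assumes "charge S \<mu>" "E \<in> S"
  shows "\<mu> E = (\<Sum>r\<in>level t. \<mu> (E \<inter> cyl r t))"
proof -
  have "E = (\<Union>r\<in>level t. E \<inter> cyl r t)" using UN_level_cyls[of t] by blast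
  also have "\<mu> \<dots> = (\<Sum>r\<in>level t. \<mu> (E \<inter> cyl r t))"
    using assms finite_level disjoint_family_level_cyls[of "\<lambda>_. E"] by (intro charge_sum) auto
  finally show ?thesis .
qed

lemma charge_level_regroup:
  assumes "charge S \<mu>" "s \<le> t" "E \<in> S"
  shows "(\<Sum>r\<in>level t. g (trunc s r) * \<mu> (E \<inter> cyl r t)) = (\<Sum>r\<in>level s. g r * \<mu> (E \<inter> cyl r s))"
proof -
  have children: "\<mu> (E \<inter> cyl r s) = (\<Sum>r'\<in>{r'\<in>level t. trunc s r' = r}. \<mu> (E \<inter> cyl r' t))"
    if r: "r \<in> level s" for r
  proof -
    have "E \<inter> cyl r s = (\<Union>r'\<in>{r'\<in>level t. trunc s r' = r}. E \<inter> cyl r' t)"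
    proof (intro equalityI subsetI)
      fix x assume x: "x \<in> E \<inter> cyl r s"
      then have "trunc s (trunc t x) = r" using level_rep_unique[OF r] trunc_trunc[OF assms(2)] by auto
      with x show "x \<in> (\<Union>r'\<in>{r'\<in>level t. trunc s r' = r}. E \<inter> cyl r' t)"
        by (intro UN_I[of "trunc t x"]) auto
    qed (use cyl_subset_trunc[OF assms(2)] in blast)
    also have "\<mu> \<dots> = (\<Sum>r'\<in>{r'\<in>level t. trunc s r' = r}. \<mu> (E \<inter> cyl r' t))"
      using assms(1,3) finite_level disjoint_family_level_cyls[of "\<lambda>_. E" t]
      by (intro charge_sum) (auto intro: disjoint_family_on_mono[rotated])
    finally show ?thesis .
  qed
  have "(\<Sum>r\<in>level s. g r * \<mu> (E \<inter> cyl r s))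
      = (\<Sum>r\<in>level s. \<Sum>r'\<in>{r'\<in>level t. trunc s r' = r}. g (trunc s r') * \<mu> (E \<inter> cyl r' t))"
    by (intro sum.cong refl) (simp add: children sum_distrib_left)
  also have "\<dots> = (\<Sum>r\<in>level t. g (trunc s r) * \<mu> (E \<inter> cyl r t))"
    using finite_level[of s] finite_level[of t] by (intro sum.group) (auto simp: level_def)
  finally show ?thesis by simp
qed

lemma charge_cyl_determined:
  assumes "charge S \<mu>"
  shows "\<mu> {w. \<Phi> (cyl w t)} = (\<Sum>r\<in>{r\<in>level t. \<Phi> (cyl r t)}. \<mu> (cyl r t))"
  unfolding cyl_determined_set using assms finite_level disjoint_family_level_cyls[of "\<lambda>_. UNIV" t]
  by (intro charge_sum) (auto intro: disjoint_family_on_mono[rotated])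

lemma charge_mono:
  assumes "charge S \<mu>" "\<forall>E\<in>S. 0 \<le> \<mu> E" "A \<in> S" "B \<in> S" "A \<subseteq> B"
  shows "\<mu> A \<le> \<mu> B"
proof -
  have "\<mu> B = \<mu> A + \<mu> (B - A)"
    using chargeD[OF assms(1), of A "B - A"] assms(3-5) by (auto simp: Un_absorb1)
  then show ?thesis using assms(2-4) by auto
qed

text \<open>A charge bounded by gamma on S has total variation at most 2 gamma on every finite
  disjoint family: split the family according to the sign of the charge.\<close>

lemma charge_abs_sum_le:
  assumes \<nu>: "charge S \<nu>" "\<forall>B\<in>S. \<bar>\<nu> B\<bar> \<le> \<gamma>"
    and G: "finite G" "\<And>i. i \<in> G \<Longrightarrow> A i \<in> S" "disjoint_family_on A G"
  shows "(\<Sum>i\<in>G. \<bar>\<nu> (A i)\<bar>) \<le> 2 * \<gamma>"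
proof -
  have part_sum: "(\<Sum>i\<in>H. \<nu> (A i)) = \<nu> (\<Union>i\<in>H. A i) \<and> (\<Union>i\<in>H. A i) \<in> S"
    if H: "H \<subseteq> G" for H
  proof
    show "(\<Sum>i\<in>H. \<nu> (A i)) = \<nu> (\<Union>i\<in>H. A i)"
      using H G by (intro charge_sum[OF \<nu>(1), symmetric] finite_subset[OF H G(1)]
          disjoint_family_on_mono[OF H G(3)]) auto
    show "(\<Union>i\<in>H. A i) \<in> S" using H G finite_subset[OF H G(1)] by (intro sa.finite_UN) auto
  qed
  let ?Gp = "{i\<in>G. 0 \<le> \<nu> (A i)}" and ?Gm = "{i\<in>G. \<not> 0 \<le> \<nu> (A i)}"
  have "(\<Sum>i\<in>?Gp. \<bar>\<nu> (A i)\<bar>) = \<nu> (\<Union>i\<in>?Gp. A i)" using part_sum[of ?Gp] by simp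
  also have "\<dots> \<le> \<gamma>" using \<nu>(2) part_sum[of ?Gp] by (auto simp: abs_le_iff)
  finally have pos: "(\<Sum>i\<in>?Gp. \<bar>\<nu> (A i)\<bar>) \<le> \<gamma>" .
  have "(\<Sum>i\<in>?Gm. \<bar>\<nu> (A i)\<bar>) = - \<nu> (\<Union>i\<in>?Gm. A i)" using part_sum[of ?Gm] by (simp add: sum_negf)
  also have "\<dots> \<le> \<gamma>" using \<nu>(2) part_sum[of ?Gm] by (auto simp: abs_le_iff)
  finally have neg: "(\<Sum>i\<in>?Gm. \<bar>\<nu> (A i)\<bar>) \<le> \<gamma>" .
  have "(\<Sum>i\<in>G. \<bar>\<nu> (A i)\<bar>) = (\<Sum>i\<in>?Gp \<union> ?Gm. \<bar>\<nu> (A i)\<bar>)" by (rule sum.cong) auto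
  also have "\<dots> = (\<Sum>i\<in>?Gp. \<bar>\<nu> (A i)\<bar>) + (\<Sum>i\<in>?Gm. \<bar>\<nu> (A i)\<bar>)"
    by (rule sum.union_disjoint) (use G(1) in auto)
  finally show ?thesis using pos neg by simp
qed

lemma fap_mono:
  assumes "fap S P" "A \<in> S" "B \<in> S" "A \<subseteq> B"
  shows "P A \<le> P B"
  by (rule charge_mono[OF fap_charge[OF assms(1)] _ assms(2-4)]) (simp add: fap_nonneg[OF assms(1)])

lemma fap_le_1:
  assumes "fap S P"
  shows "P E \<le> 1"
proof (cases "E \<in> S")
  case True
  then show ?thesis using fap_mono[OF assms True sa.top] assms by (simp add: fap_def)
qed (use assms in \<open>simp add: fap_def\<close>)

text \<open>Conditional probabilities lie in [0, 1] (with the convention x / 0 = 0).\<close>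

lemma fap_cond_bounds:
  assumes "fap S P" "E \<in> S" "c \<in> S"
  shows "0 \<le> P (E \<inter> c) / P c \<and> P (E \<inter> c) / P c \<le> 1"
proof -
  have "P (E \<inter> c) \<le> P c" using fap_mono[OF assms(1), of "E \<inter> c" c] assms(2,3) by blast
  moreover have "0 \<le> P (E \<inter> c)" by (rule fap_nonneg[OF assms(1)])
  ultimately show ?thesis by (cases "P c = 0") (auto simp: divide_le_eq_1)
qed

end

subsection \<open>Disagreement cylinders and merging\<close>

definition cond_gap :: "path set set \<Rightarrow> (path set \<Rightarrow> real) \<Rightarrow> (path set \<Rightarrow> real) \<Rightarrow> path set \<Rightarrow> real" where
  "cond_gap S P Q c = (SUP E\<in>S. \<bar>P (E \<inter> c) / P c - Q (E \<inter> c) / Q c\<bar>)"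

definition disagree :: "path set set \<Rightarrow> (path set \<Rightarrow> real) \<Rightarrow> (path set \<Rightarrow> real) \<Rightarrow> real \<Rightarrow> path set \<Rightarrow> bool" where
  "disagree S P Q \<epsilon> c \<longleftrightarrow> 0 < Q c \<and> (P c = 0 \<or> \<epsilon> < cond_gap S P Q c)"

lemma merges_iff_disagree:
  "merges S P Q \<longleftrightarrow> (\<forall>\<epsilon>>0. (\<lambda>t. Q {w. disagree S P Q \<epsilon> (cyl w t)}) \<longlonglongrightarrow> 0)"
  by (simp add: merges_def disagree_def cond_gap_def cond_prob_def)

context cyl_sigma
begin

lemma cond_gap_bdd:
  assumes "fap S P" "fap S Q" "c \<in> S"
  shows "bdd_above ((\<lambda>E. \<bar>P (E \<inter> c) / P c - Q (E \<inter> c) / Q c\<bar>) ` S)"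
proof (rule bdd_aboveI2)
  fix E assume "E \<in> S"
  then show "\<bar>P (E \<inter> c) / P c - Q (E \<inter> c) / Q c\<bar> \<le> 1"
    using fap_cond_bounds[OF assms(1)] fap_cond_bounds[OF assms(2)] assms(3) by fastforce
qed

lemma cond_gap_upper:
  "fap S P \<Longrightarrow> fap S Q \<Longrightarrow> c \<in> S \<Longrightarrow> E \<in> S \<Longrightarrow> \<bar>P (E \<inter> c) / P c - Q (E \<inter> c) / Q c\<bar> \<le> cond_gap S P Q c"
  unfolding cond_gap_def by (rule cSUP_upper[OF _ cond_gap_bdd])

lemma cond_gap_witness:
  assumes "fap S P" "fap S Q" "c \<in> S" "\<epsilon> < cond_gap S P Q c"
  shows "\<exists>E\<in>S. \<epsilon> < \<bar>P (E \<inter> c) / P c - Q (E \<inter> c) / Q c\<bar>"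
  using assms(4) less_cSUP_iff[OF _ cond_gap_bdd[OF assms(1-3)], of \<epsilon>] sa.empty_sets
  unfolding cond_gap_def by blast

end

subsection \<open>(2) implies (3): mixture components are absolutely continuous\<close>

text \<open>If P = a Q + (1 - a) R then Q \<le> P / a, so P-null sequences are Q-null.\<close>

lemma mixture_abs_cont:
  assumes fQ: "fap S Q" and fR: "fap S R" and \<alpha>: "0 < \<alpha>" "\<alpha> < 1"
    and P: "P = (\<lambda>E. \<alpha> * Q E + (1 - \<alpha>) * R E)"
  shows "abs_cont S Q P"
  unfolding abs_cont_def
proof (intro allI impI)
  fix En :: "nat \<Rightarrow> path set" assume "(\<lambda>n. P (En n)) \<longlonglongrightarrow> 0"
  then have lim: "(\<lambda>n. P (En n) / \<alpha>) \<longlonglongrightarrow> 0" by (rule tendsto_divide_zero)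
  have "Q (En n) \<le> P (En n) / \<alpha>" for n
    using fap_nonneg[OF fR, of "En n"] \<alpha> by (simp add: P le_divide_eq mult.commute)
  then show "(\<lambda>n. Q (En n)) \<longlonglongrightarrow> 0"
    using fap_nonneg[OF fQ] by (intro tendsto_sandwich[OF _ _ tendsto_const lim]) auto
qed

lemma blackwell_dubins_imp_mixture_merging:
  assumes "blackwell_dubins S P" "fap S Q" "fap S R" "0 < \<alpha>" "\<alpha> < 1"
    and P: "P = (\<lambda>E. \<alpha> * Q E + (1 - \<alpha>) * R E)"
  shows "merges S P Q \<and> merges S P R"
proof -
  have "abs_cont S Q P" by (rule mixture_abs_cont[OF assms(2-5) P])
  moreover have "abs_cont S R P"
    by (rule mixture_abs_cont[OF assms(3,2), of "1 - \<alpha>"]) (use assms(4,5) in \<open>auto simp: P algebra_simps\<close>)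
  ultimately show ?thesis using assms(1-3) unfolding blackwell_dubins_def by blast
qed

subsection \<open>(3) implies (1): merging with a probability that agrees on F forces equality\<close>

locale cyl_prob = cyl_sigma +
  fixes P :: "path set \<Rightarrow> real"
  assumes fap_P: "fap S P"
begin

lemma cyl_diff_bound:
  assumes fQ: "fap S Q" and E: "E \<in> S" and c: "c \<in> S" and Pc: "P c = Q c" and \<epsilon>: "0 < \<epsilon>"
  shows "\<bar>P (E \<inter> c) - Q (E \<inter> c)\<bar> \<le> (if disagree S P Q \<epsilon> c then Q c else 0) + \<epsilon> * Q c"
proof -
  have P_le: "P (E \<inter> c) \<le> Q c" and Q_le: "Q (E \<inter> c) \<le> Q c"
    using fap_mono[OF fap_P, of "E \<inter> c" c] fap_mono[OF fQ, of "E \<inter> c" c] E c Pc by auto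
  have nonneg: "0 \<le> P (E \<inter> c)" "0 \<le> Q (E \<inter> c)" "0 \<le> Q c"
    using fap_nonneg[OF fap_P] fap_nonneg[OF fQ] by auto
  show ?thesis
  proof (cases "disagree S P Q \<epsilon> c \<or> Q c = 0")
    case True
    moreover have "0 \<le> \<epsilon> * Q c" using nonneg \<epsilon> by simp
    ultimately show ?thesis using P_le Q_le nonneg by (auto simp: abs_le_iff)
  next
    case False
    then have Qc: "0 < Q c" and gap: "cond_gap S P Q c \<le> \<epsilon>"
      using nonneg Pc by (auto simp: disagree_def)
    have "\<bar>P (E \<inter> c) / Q c - Q (E \<inter> c) / Q c\<bar> \<le> \<epsilon>"
      using cond_gap_upper[OF fap_P fQ c E] gap Pc by simp
    then have "\<bar>P (E \<inter> c) - Q (E \<inter> c)\<bar> \<le> \<epsilon> * Q c"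
      using Qc by (simp add: diff_divide_distrib[symmetric] divide_le_eq)
    then show ?thesis using False by simp
  qed
qed

lemma level_diff_bound:
  assumes fQ: "fap S Q" and agree: "\<forall>F\<in>cyl_alg. Q F = P F" and E: "E \<in> S" and \<epsilon>: "0 < \<epsilon>"
  shows "\<bar>P E - Q E\<bar> \<le> Q {w. disagree S P Q \<epsilon> (cyl w t)} + \<epsilon>"
proof -
  let ?G = "{r\<in>level t. disagree S P Q \<epsilon> (cyl r t)}"
  have "P E - Q E = (\<Sum>r\<in>level t. P (E \<inter> cyl r t) - Q (E \<inter> cyl r t))"
    using charge_level_sum[OF fap_charge[OF fap_P] E] charge_level_sum[OF fap_charge[OF fQ] E]
    by (simp add: sum_subtractf)
  then have "\<bar>P E - Q E\<bar> \<le> (\<Sum>r\<in>level t. \<bar>P (E \<inter> cyl r t) - Q (E \<inter> cyl r t)\<bar>)"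
    by (simp add: sum_abs)
  also have "\<dots> \<le> (\<Sum>r\<in>level t. (if r \<in> ?G then Q (cyl r t) else 0) + \<epsilon> * Q (cyl r t))"
    using cyl_diff_bound[OF fQ E cyl_sets _ \<epsilon>] agree cyl_in_cyl_alg
    by (intro sum_mono) (simp add: if_distrib)
  also have "\<dots> = (\<Sum>r\<in>?G. Q (cyl r t)) + \<epsilon> * (\<Sum>r\<in>level t. Q (cyl r t))"
    by (simp add: sum.distrib sum_distrib_left sum.If_cases finite_level Int_def)
  also have "(\<Sum>r\<in>level t. Q (cyl r t)) = 1"
    using charge_level_sum[OF fap_charge[OF fQ] sa.top, of t] fQ by (simp add: fap_def)
  also have "(\<Sum>r\<in>?G. Q (cyl r t)) = Q {w. disagree S P Q \<epsilon> (cyl w t)}"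
    using charge_cyl_determined[OF fap_charge[OF fQ]] by simp
  finally show ?thesis by simp
qed

text \<open>Hence a Q in E(P) with which P merges is P itself: let t tend to infinity, then eps
  to zero.\<close>

lemma merges_agreeing_imp_eq:
  assumes fQ: "fap S Q" and agree: "\<forall>F\<in>cyl_alg. Q F = P F" and merge: "merges S P Q"
  shows "Q = P"
proof
  fix E
  show "Q E = P E"
  proof (cases "E \<in> S")
    case False then show ?thesis using fap_P fQ by (simp add: fap_def)
  next
    case E: True
    have "\<bar>P E - Q E\<bar> \<le> \<epsilon>" if \<epsilon>: "0 < \<epsilon>" for \<epsilon>
    proof -
      have "(\<lambda>t. Q {w. disagree S P Q \<epsilon> (cyl w t)}) \<longlonglongrightarrow> 0"
        using merge \<epsilon> by (simp add: merges_iff_disagree)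
      moreover have "\<bar>P E - Q E\<bar> - \<epsilon> \<le> Q {w. disagree S P Q \<epsilon> (cyl w t)}" for t
        using level_diff_bound[OF fQ agree E \<epsilon>, of t] by linarith
      ultimately have "\<bar>P E - Q E\<bar> - \<epsilon> \<le> 0" by (intro LIMSEQ_le_const) auto
      then show ?thesis by simp
    qed
    then show ?thesis using field_le_epsilon[of "\<bar>P E - Q E\<bar>" 0] by fastforce
  qed
qed

lemma mixture_merging_imp_extreme:
  assumes H: "\<forall>Q R. \<forall>\<alpha>::real. fap S Q \<longrightarrow> fap S R \<longrightarrow> 0 < \<alpha> \<longrightarrow> \<alpha> < 1 \<longrightarrow>
              P = (\<lambda>E. \<alpha> * Q E + (1 - \<alpha>) * R E) \<longrightarrow> merges S P Q \<and> merges S P R"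
  shows "extreme_point (EP S P) P"
  unfolding extreme_point_def
proof (intro conjI ballI allI impI)
  show "P \<in> EP S P" using fap_P by (simp add: EP_def)
  fix Q R and \<alpha> :: real
  assume Q: "Q \<in> EP S P" and R: "R \<in> EP S P"
    and mix: "0 < \<alpha> \<and> \<alpha> < 1 \<and> P = (\<lambda>E. \<alpha> * Q E + (1 - \<alpha>) * R E)"
  have "merges S P Q" using H Q R mix by (auto simp: EP_def)
  then show QP: "Q = P" using Q by (intro merges_agreeing_imp_eq) (auto simp: EP_def)
  show "R = P"
  proof
    fix E
    have "(1 - \<alpha>) * (R E - P E) = 0" using fun_cong[OF conjunct2[OF conjunct2[OF mix]], of E] QP
      by (simp add: algebra_simps)
    then show "R E = P E" using mix by simp
  qed
qed

end

subsection \<open>Extremality: dominated charges vanishing on F vanish\<close>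

context cyl_prob
begin

lemma perturbation_in_EP:
  assumes d: "charge S d" "\<forall>F\<in>cyl_alg. d F = 0" "\<forall>E\<in>S. \<bar>d E\<bar> \<le> P E"
  shows "(\<lambda>E. if E \<in> S then P E + d E else 0) \<in> EP S P"
proof -
  define P' where "P' = (\<lambda>E. if E \<in> S then P E + d E else 0)"
  have "fap S P'"
    unfolding fap_def
  proof (intro conjI allI impI ballI)
    fix E assume "E \<notin> S" then show "P' E = 0" by (simp add: P'_def)
  next
    fix E assume E: "E \<in> S"
    then have "\<bar>d E\<bar> \<le> P E" using d(3) by blast
    then show "0 \<le> P' E" using E by (auto simp: P'_def abs_le_iff)
  next
    have "d UNIV = 0" using d(2) UNIV_in_cyl_alg by blast
    then show "P' UNIV = 1" using fap_P by (simp add: P'_def fap_def)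
  next
    fix A B assume AB: "A \<in> S" "B \<in> S" "A \<inter> B = {}"
    then show "P' (A \<union> B) = P' A + P' B"
      using chargeD[OF d(1) AB] chargeD[OF fap_charge[OF fap_P] AB] sa.Un[OF AB(1,2)]
      by (simp add: P'_def)
  qed
  moreover have "\<forall>F\<in>cyl_alg. P' F = P F" using d(2) cyl_alg_sets by (simp add: P'_def)
  ultimately have "P' \<in> EP S P" by (simp add: EP_def)
  then show ?thesis by (simp add: P'_def)
qed

text \<open>If P is extreme in E(P), a charge vanishing on F and dominated by K P vanishes:
  otherwise P \<plusminus> d/(K+1) would be two distinct members of E(P) with midpoint P.\<close>

lemma extreme_point_rigid:
  assumes ext: "extreme_point (EP S P) P"
    and d: "charge S d" "\<forall>F\<in>cyl_alg. d F = 0" "\<forall>E\<in>S. \<bar>d E\<bar> \<le> K * P E"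
  shows "\<forall>E\<in>S. d E = 0"
proof -
  have "\<bar>d UNIV\<bar> \<le> K" using d(3)[rule_format, OF sa.top] fap_P by (simp add: fap_def)
  then have "0 \<le> K" using abs_ge_zero[of "d UNIV"] by linarith
  define c where "c = 1 / (K + 1)"
  have c: "0 < c" "0 \<le> c * K" "c * K \<le> 1" using \<open>0 \<le> K\<close> by (auto simp: c_def field_simps)
  define P' where "P' s E = (if E \<in> S then P E + s * c * d E else 0)" for s E
  have in_EP: "P' s \<in> EP S P" if s: "\<bar>s\<bar> = 1" for s
  proof -
    have "\<bar>s * c * d E\<bar> \<le> P E" if E: "E \<in> S" for E
    proof -
      have "\<bar>s * c * d E\<bar> = c * \<bar>d E\<bar>" using s c by (simp add: abs_mult)
      also have "\<dots> \<le> c * (K * P E)" using d(3) E c by (simp add: mult_left_mono)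
      also have "\<dots> \<le> P E"
        using mult_left_le_one_le[OF fap_nonneg[OF fap_P] c(2,3)] by (simp add: mult.assoc)
      finally show ?thesis .
    qed
    then show ?thesis
      unfolding P'_def using d(2) charge_scale[OF d(1), of "s * c"]
      by (intro perturbation_in_EP[of "\<lambda>E. s * c * d E", simplified]) auto
  qed
  have mid: "P = (\<lambda>E. (1/2) * P' 1 E + (1 - 1/2) * P' (-1) E)"
  proof
    fix E show "P E = (1/2) * P' 1 E + (1 - 1/2) * P' (-1) E"
      using fap_P by (cases "E \<in> S") (simp_all add: P'_def fap_def field_simps)
  qed
  have "\<And>Q R \<alpha>. Q \<in> EP S P \<Longrightarrow> R \<in> EP S P \<Longrightarrow> 0 < \<alpha> \<Longrightarrow> \<alpha> < 1 \<Longrightarrow>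
      P = (\<lambda>E. \<alpha> * Q E + (1 - \<alpha>) * R E) \<Longrightarrow> Q = P"
    using ext unfolding extreme_point_def by blast
  from this[OF in_EP[of 1] in_EP[of "-1"] _ _ mid] have "P' 1 = P" by simp
  show ?thesis
  proof
    fix E assume "E \<in> S"
    then have "P E + c * d E = P E" using fun_cong[OF \<open>P' 1 = P\<close>, of E] by (simp add: P'_def)
    then show "d E = 0" using c by simp
  qed
qed

subsection \<open>Level-t approximation of a charge\<close>

definition approx :: "(path set \<Rightarrow> real) \<Rightarrow> nat \<Rightarrow> path set \<Rightarrow> real" where
  "approx \<mu> t E = (\<Sum>r\<in>level t. \<mu> (cyl r t) / P (cyl r t) * P (E \<inter> cyl r t))"

lemma approx_charge: "charge S (approx \<mu> t)"
  unfolding charge_def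
proof (intro ballI impI)
  fix A B assume AB: "A \<in> S" "B \<in> S" "A \<inter> B = {}"
  have "P ((A \<union> B) \<inter> cyl r t) = P (A \<inter> cyl r t) + P (B \<inter> cyl r t)" for r
  proof -
    have "(A \<union> B) \<inter> cyl r t = (A \<inter> cyl r t) \<union> (B \<inter> cyl r t)" by blast
    moreover have "(A \<inter> cyl r t) \<inter> (B \<inter> cyl r t) = {}" using AB(3) by blast
    ultimately show ?thesis
      using chargeD[OF fap_charge[OF fap_P], of "A \<inter> cyl r t" "B \<inter> cyl r t"] AB(1,2) by (simp add: sa.Int)
  qed
  then show "approx \<mu> t (A \<union> B) = approx \<mu> t A + approx \<mu> t B"
    by (simp add: approx_def sum.distrib distrib_left)
qed

lemma approx_add: "approx (\<lambda>E. \<mu> E + \<nu> E) t E = approx \<mu> t E + approx \<nu> t E"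
  by (simp add: approx_def add_divide_distrib distrib_right sum.distrib)

lemma approx_in_cyl:
  assumes r: "r \<in> level t"
  shows "approx \<mu> t (E \<inter> cyl r t) = \<mu> (cyl r t) / P (cyl r t) * P (E \<inter> cyl r t)"
proof -
  have "P (E \<inter> cyl r t \<inter> cyl r' t) = (if r' = r then P (E \<inter> cyl r t) else 0)"
    if "r' \<in> level t" for r'
  proof (cases "r' = r")
    case False
    then have "E \<inter> cyl r t \<inter> cyl r' t = {}" using level_cyls_disjoint[OF r that] by blast
    then show ?thesis using False charge_empty[OF fap_charge[OF fap_P]] by simp
  qed (simp add: Int_assoc)
  then have "approx \<mu> t (E \<inter> cyl r t)
      = (\<Sum>r'\<in>level t. if r' = r then \<mu> (cyl r t) / P (cyl r t) * P (E \<inter> cyl r t) else 0)"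
    unfolding approx_def by (intro sum.cong) auto
  then show ?thesis using r finite_level by simp
qed

lemma approx_nonneg_bounds:
  assumes \<rho>: "charge S \<rho>" "\<forall>E\<in>S. 0 \<le> \<rho> E" and E: "E \<in> S"
  shows "0 \<le> approx \<rho> t E \<and> approx \<rho> t E \<le> \<rho> UNIV"
proof -
  have each: "0 \<le> \<rho> (cyl r t) / P (cyl r t) * P (E \<inter> cyl r t) \<and>
      \<rho> (cyl r t) / P (cyl r t) * P (E \<inter> cyl r t) \<le> \<rho> (cyl r t)" for r
  proof -
    have q: "0 \<le> P (E \<inter> cyl r t) / P (cyl r t)" "P (E \<inter> cyl r t) / P (cyl r t) \<le> 1"
      using fap_cond_bounds[OF fap_P E cyl_sets] by auto
    have "0 \<le> \<rho> (cyl r t)" using \<rho>(2) by blast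
    then have "0 \<le> \<rho> (cyl r t) * (P (E \<inter> cyl r t) / P (cyl r t)) \<and>
        \<rho> (cyl r t) * (P (E \<inter> cyl r t) / P (cyl r t)) \<le> \<rho> (cyl r t)"
      by (intro conjI mult_nonneg_nonneg mult_left_le q)
    then show ?thesis by simp
  qed
  have "approx \<rho> t E \<le> (\<Sum>r\<in>level t. \<rho> (cyl r t))"
    unfolding approx_def using each by (intro sum_mono) blast
  also have "\<dots> = \<rho> UNIV" using charge_level_sum[OF \<rho>(1) sa.top, of t] by simp
  finally show ?thesis unfolding approx_def using each by (auto intro: sum_nonneg)
qed

end

subsection \<open>Uniform convergence of the approximations of a dominated charge\<close>

text \<open>An AM-GM estimate turning first moments of the density increments into second moments.\<close>

lemma abs_le_quadratic:
  fixes d \<delta> :: real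
  assumes "0 < \<delta>"
  shows "\<bar>d\<bar> \<le> d\<^sup>2 / (2 * \<delta>) + \<delta> / 2"
proof -
  have "0 \<le> (\<bar>d\<bar> - \<delta>)\<^sup>2" by simp
  then have "2 * \<delta> * \<bar>d\<bar> \<le> d\<^sup>2 + \<delta>\<^sup>2" by (simp add: power2_eq_square algebra_simps abs_mult_self_eq)
  then show ?thesis using assms by (simp add: field_simps power2_eq_square)
qed

locale dominated = cyl_prob +
  fixes \<mu> :: "path set \<Rightarrow> real" and K :: real
  assumes charge_mu: "charge S \<mu>"
    and mu_nonneg: "\<forall>E\<in>S. 0 \<le> \<mu> E"
    and mu_le: "\<forall>E\<in>S. \<mu> E \<le> K * P E"
begin

text \<open>The energy increases with t by the P-variance of the density increments
  and is bounded by K mu(UNIV); this is the martingale argument behind convergence.\<close>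

definition dens :: "nat \<Rightarrow> path \<Rightarrow> real" where
  "dens t r = \<mu> (cyl r t) / P (cyl r t)"

definition energy :: "nat \<Rightarrow> real" where
  "energy t = (\<Sum>r\<in>level t. dens t r * \<mu> (cyl r t))"

lemma K_nonneg: "0 \<le> K"
proof -
  have "0 \<le> \<mu> UNIV" "\<mu> UNIV \<le> K * P UNIV" using mu_nonneg mu_le by auto
  then show ?thesis using fap_P by (simp add: fap_def)
qed

text \<open>P-null cylinders are mu-null, so the density recovers mu even where P vanishes.\<close>

lemma dens_mult: "P (cyl r t) * dens t r = \<mu> (cyl r t)"
proof (cases "P (cyl r t) = 0")
  case True
  moreover have "0 \<le> \<mu> (cyl r t)" "\<mu> (cyl r t) \<le> K * P (cyl r t)" using mu_nonneg mu_le by auto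
  ultimately have "\<mu> (cyl r t) = 0" by simp
  then show ?thesis by (simp add: dens_def)
qed (simp add: dens_def)

lemma dens_nonneg: "0 \<le> dens t r"
  using mu_nonneg fap_nonneg[OF fap_P] by (simp add: dens_def)

lemma dens_le: "dens t r \<le> K"
proof (cases "P (cyl r t) = 0")
  case False
  then have "0 < P (cyl r t)" using fap_nonneg[OF fap_P, of "cyl r t"] by simp
  then show ?thesis using mu_le by (simp add: dens_def divide_le_eq mult.commute)
qed (simp add: dens_def K_nonneg)

lemma approx_dens: "approx \<mu> t E = (\<Sum>r\<in>level t. dens t r * P (E \<inter> cyl r t))"
  by (simp add: approx_def dens_def)

text \<open>Pythagoras for the martingale of densities: the energy increment is the P-weighted
  square of the density increments.\<close>

lemma energy_increment:
  assumes st: "s \<le> t"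
  shows "(\<Sum>r\<in>level t. P (cyl r t) * (dens t r - dens s (trunc s r))\<^sup>2) = energy t - energy s"
proof -
  have expand: "P (cyl r t) * (dens t r - dens s (trunc s r))\<^sup>2
      = dens t r * \<mu> (cyl r t) - 2 * (dens s (trunc s r) * \<mu> (cyl r t))
        + (dens s (trunc s r))\<^sup>2 * P (cyl r t)" for r
  proof -
    have "P (cyl r t) * (dens t r - dens s (trunc s r))\<^sup>2
        = (P (cyl r t) * dens t r) * dens t r - 2 * (dens s (trunc s r) * (P (cyl r t) * dens t r))
          + (dens s (trunc s r))\<^sup>2 * P (cyl r t)"
      by (simp add: power2_eq_square algebra_simps)
    then show ?thesis by (simp add: dens_mult mult.commute)
  qed
  have cross: "(\<Sum>r\<in>level t. dens s (trunc s r) * \<mu> (cyl r t)) = energy s"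
    using charge_level_regroup[OF charge_mu st sa.top, of "dens s"] by (simp add: energy_def)
  have "(\<Sum>r\<in>level t. (dens s (trunc s r))\<^sup>2 * P (cyl r t)) = (\<Sum>r\<in>level s. (dens s r)\<^sup>2 * P (cyl r s))"
    using charge_level_regroup[OF fap_charge[OF fap_P] st sa.top, of "\<lambda>r. (dens s r)\<^sup>2"] by simp
  also have "\<dots> = energy s"
    unfolding energy_def using dens_mult by (intro sum.cong) (simp_all add: power2_eq_square algebra_simps)
  finally have square: "(\<Sum>r\<in>level t. (dens s (trunc s r))\<^sup>2 * P (cyl r t)) = energy s" .
  show ?thesis
    by (simp add: expand sum.distrib sum_subtractf sum_distrib_left[symmetric] cross square energy_def[of t])
qed

lemma energy_mono: "s \<le> t \<Longrightarrow> energy s \<le> energy t"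
  using energy_increment[of s t] sum_nonneg[of "level t" "\<lambda>r. P (cyl r t) * (dens t r - dens s (trunc s r))\<^sup>2"]
    fap_nonneg[OF fap_P] by simp

lemma energy_bounded: "energy t \<le> K * \<mu> UNIV"
proof -
  have "energy t \<le> (\<Sum>r\<in>level t. K * \<mu> (cyl r t))"
    unfolding energy_def using dens_le mu_nonneg by (intro sum_mono mult_right_mono) auto
  also have "\<dots> = K * \<mu> UNIV"
    using charge_level_sum[OF charge_mu sa.top, of t] by (simp add: sum_distrib_left)
  finally show ?thesis .
qed

lemma energy_cauchy:
  assumes "0 < e"
  shows "\<exists>N. \<forall>s\<ge>N. \<forall>t\<ge>s. energy t - energy s < e"
proof -
  have "incseq energy" using energy_mono by (simp add: incseq_def)
  then have "Cauchy energy"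
    using incseq_convergent[of energy "K * \<mu> UNIV"] energy_bounded LIMSEQ_imp_Cauchy by blast
  then obtain N where N: "\<forall>m\<ge>N. \<forall>n\<ge>N. norm (energy m - energy n) < e"
    using CauchyD[OF _ assms] by blast
  show ?thesis
  proof (intro exI allI impI)
    fix s t assume "N \<le> s" "s \<le> t"
    then have "norm (energy t - energy s) < e" using N by simp
    then show "energy t - energy s < e" by simp
  qed
qed

lemma approx_increment:
  assumes st: "s \<le> t" and E: "E \<in> S" and \<delta>: "0 < \<delta>"
  shows "\<bar>approx \<mu> t E - approx \<mu> s E\<bar> \<le> (energy t - energy s) / (2 * \<delta>) + \<delta> / 2"
proof -
  define inc where "inc r = dens t r - dens s (trunc s r)" for r
  have "approx \<mu> s E = (\<Sum>r\<in>level t. dens s (trunc s r) * P (E \<inter> cyl r t))"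
    using charge_level_regroup[OF fap_charge[OF fap_P] st E, of "dens s"] by (simp add: approx_dens)
  then have "approx \<mu> t E - approx \<mu> s E = (\<Sum>r\<in>level t. inc r * P (E \<inter> cyl r t))"
    by (simp add: approx_dens inc_def sum_subtractf left_diff_distrib)
  then have "\<bar>approx \<mu> t E - approx \<mu> s E\<bar> \<le> (\<Sum>r\<in>level t. \<bar>inc r\<bar> * P (E \<inter> cyl r t))"
    using sum_abs[of "\<lambda>r. inc r * P (E \<inter> cyl r t)" "level t"] fap_nonneg[OF fap_P]
    by (simp add: abs_mult)
  also have "\<dots> \<le> (\<Sum>r\<in>level t. P (cyl r t) * (inc r)\<^sup>2 / (2 * \<delta>) + \<delta> / 2 * P (cyl r t))"
  proof (rule sum_mono)
    fix r
    have "\<bar>inc r\<bar> * P (E \<inter> cyl r t) \<le> \<bar>inc r\<bar> * P (cyl r t)"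
      using fap_mono[OF fap_P, of "E \<inter> cyl r t" "cyl r t"] E by (intro mult_left_mono) auto
    also have "\<dots> \<le> ((inc r)\<^sup>2 / (2 * \<delta>) + \<delta> / 2) * P (cyl r t)"
      using abs_le_quadratic[OF \<delta>, of "inc r"] fap_nonneg[OF fap_P] by (intro mult_right_mono) auto
    finally show "\<bar>inc r\<bar> * P (E \<inter> cyl r t) \<le> P (cyl r t) * (inc r)\<^sup>2 / (2 * \<delta>) + \<delta> / 2 * P (cyl r t)"
      by (simp add: algebra_simps)
  qed
  also have "\<dots> = (\<Sum>r\<in>level t. P (cyl r t) * (inc r)\<^sup>2) / (2 * \<delta>) + \<delta> / 2 * (\<Sum>r\<in>level t. P (cyl r t))"
    by (simp add: sum.distrib sum_divide_distrib sum_distrib_left)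
  also have "(\<Sum>r\<in>level t. P (cyl r t)) = 1"
    using charge_level_sum[OF fap_charge[OF fap_P] sa.top, of t] fap_P by (simp add: fap_def)
  finally show ?thesis using energy_increment[OF st] by (simp add: inc_def)
qed

lemma approx_uniformly_cauchy:
  assumes \<gamma>: "0 < \<gamma>"
  shows "\<exists>N. \<forall>s\<ge>N. \<forall>t\<ge>N. \<forall>E\<in>S. \<bar>approx \<mu> t E - approx \<mu> s E\<bar> \<le> \<gamma>"
proof -
  obtain N where N: "\<forall>s\<ge>N. \<forall>t\<ge>s. energy t - energy s < \<gamma>\<^sup>2"
    using energy_cauchy[of "\<gamma>\<^sup>2"] \<gamma> by auto
  have ordered: "\<bar>approx \<mu> t E - approx \<mu> s E\<bar> \<le> \<gamma>" if "N \<le> s" "s \<le> t" "E \<in> S" for s t E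
  proof -
    have "(energy t - energy s) / (2 * \<gamma>) \<le> \<gamma>\<^sup>2 / (2 * \<gamma>)"
      using N that(1,2) \<gamma> by (intro divide_right_mono) (auto intro: less_imp_le)
    also have "\<dots> = \<gamma> / 2" using \<gamma> by (simp add: power2_eq_square)
    finally show ?thesis using approx_increment[OF that(2,3) \<gamma>] by linarith
  qed
  show ?thesis
  proof (intro exI allI impI ballI)
    fix s t E assume "N \<le> s" "N \<le> t" "E \<in> S"
    then show "\<bar>approx \<mu> t E - approx \<mu> s E\<bar> \<le> \<gamma>"
      using ordered[of s t E] ordered[of t s E] by (cases "s \<le> t") (auto simp: abs_minus_commute)
  qed
qed

definition approx_lim :: "path set \<Rightarrow> real" where
  "approx_lim E = lim (\<lambda>t. approx \<mu> t E)"

lemma approx_tendsto: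
  assumes E: "E \<in> S"
  shows "(\<lambda>t. approx \<mu> t E) \<longlonglongrightarrow> approx_lim E"
proof -
  have "Cauchy (\<lambda>t. approx \<mu> t E)"
  proof (rule CauchyI)
    fix e :: real assume e: "0 < e"
    then obtain N where "\<forall>s\<ge>N. \<forall>t\<ge>N. \<forall>E\<in>S. \<bar>approx \<mu> t E - approx \<mu> s E\<bar> \<le> e / 2"
      using approx_uniformly_cauchy[of "e / 2"] by auto
    then show "\<exists>M. \<forall>m\<ge>M. \<forall>n\<ge>M. norm (approx \<mu> m E - approx \<mu> n E) < e"
      using E e by (intro exI[of _ N]) force
  qed
  then show ?thesis unfolding approx_lim_def by (simp add: Cauchy_convergent_iff convergent_LIMSEQ_iff)
qed

lemma approx_lim_charge: "charge S approx_lim"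
  unfolding charge_def
proof (intro ballI impI)
  fix A B assume AB: "A \<in> S" "B \<in> S" "A \<inter> B = {}"
  have "(\<lambda>t. approx \<mu> t A + approx \<mu> t B) \<longlonglongrightarrow> approx_lim (A \<union> B)"
    using approx_tendsto[OF sa.Un[OF AB(1,2)]] chargeD[OF approx_charge AB] by simp
  moreover have "(\<lambda>t. approx \<mu> t A + approx \<mu> t B) \<longlonglongrightarrow> approx_lim A + approx_lim B"
    using AB by (intro tendsto_add approx_tendsto)
  ultimately show "approx_lim (A \<union> B) = approx_lim A + approx_lim B" using LIMSEQ_unique by blast
qed

lemma approx_bounds:
  assumes E: "E \<in> S"
  shows "0 \<le> approx \<mu> t E \<and> approx \<mu> t E \<le> K * P E"
proof
  show "0 \<le> approx \<mu> t E"
    unfolding approx_dens using dens_nonneg fap_nonneg[OF fap_P] by (intro sum_nonneg) simp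
  have "approx \<mu> t E \<le> (\<Sum>r\<in>level t. K * P (E \<inter> cyl r t))"
    unfolding approx_dens using dens_le fap_nonneg[OF fap_P] by (intro sum_mono mult_right_mono) auto
  also have "\<dots> = K * P E"
    using charge_level_sum[OF fap_charge[OF fap_P] E, of t] by (simp add: sum_distrib_left)
  finally show "approx \<mu> t E \<le> K * P E" .
qed

lemma approx_lim_bounds:
  assumes E: "E \<in> S"
  shows "0 \<le> approx_lim E \<and> approx_lim E \<le> K * P E"
proof
  show "0 \<le> approx_lim E"
    by (rule LIMSEQ_le_const[OF approx_tendsto[OF E]]) (use approx_bounds[OF E] in auto)
  show "approx_lim E \<le> K * P E"
    by (rule LIMSEQ_le_const2[OF approx_tendsto[OF E]]) (use approx_bounds[OF E] in auto)
qed

lemma approx_eventually_exact: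
  assumes F: "F \<in> cyl_alg"
  shows "\<exists>L. \<forall>t\<ge>L. approx \<mu> t F = \<mu> F"
proof -
  obtain L where L: "\<forall>t\<ge>L. \<forall>r. cyl r t \<subseteq> F \<or> cyl r t \<inter> F = {}"
    using cyl_alg_eventually_fine[OF F] by blast
  have "approx \<mu> t F = \<mu> F" if t: "L \<le> t" for t
  proof -
    have "dens t r * P (F \<inter> cyl r t) = \<mu> (F \<inter> cyl r t)" for r
    proof (cases "cyl r t \<subseteq> F")
      case True
      then have "F \<inter> cyl r t = cyl r t" by blast
      then show ?thesis using dens_mult[of r t] by (simp add: mult.commute)
    next
      case False
      then have "F \<inter> cyl r t = {}" using L t by blast
      then show ?thesis using charge_empty[OF fap_charge[OF fap_P]] charge_empty[OF charge_mu] by simp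
    qed
    then have "approx \<mu> t F = (\<Sum>r\<in>level t. \<mu> (F \<inter> cyl r t))" by (simp add: approx_dens)
    also have "\<dots> = \<mu> F" using charge_level_sum[OF charge_mu cyl_alg_sets[OF F], of t] by simp
    finally show ?thesis .
  qed
  then show ?thesis by blast
qed

lemma approx_lim_on_cyl_alg:
  assumes F: "F \<in> cyl_alg"
  shows "approx_lim F = \<mu> F"
proof -
  obtain L where "\<forall>t\<ge>L. approx \<mu> t F = \<mu> F" using approx_eventually_exact[OF F] by blast
  then have "(\<lambda>t. approx \<mu> t F) \<longlonglongrightarrow> \<mu> F"
    by (intro tendsto_eventually) (auto simp: eventually_at_top_linorder)
  then show ?thesis using approx_tendsto[OF cyl_alg_sets[OF F]] LIMSEQ_unique by blast
qed

text \<open>For extreme P the limit is mu itself, so the approximations converge to mu uniformly.\<close>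

lemma approx_uniform_conv:
  assumes ext: "extreme_point (EP S P) P" and \<gamma>: "0 < \<gamma>"
  shows "\<exists>N. \<forall>t\<ge>N. \<forall>E\<in>S. \<bar>approx \<mu> t E - \<mu> E\<bar> \<le> \<gamma>"
proof -
  have "\<forall>E\<in>S. approx_lim E - \<mu> E = 0"
  proof (rule extreme_point_rigid[OF ext charge_diff[OF approx_lim_charge charge_mu]])
    show "\<forall>F\<in>cyl_alg. approx_lim F - \<mu> F = 0" using approx_lim_on_cyl_alg by simp
    show "\<forall>E\<in>S. \<bar>approx_lim E - \<mu> E\<bar> \<le> K * P E"
    proof
      fix E assume E: "E \<in> S"
      then have "0 \<le> \<mu> E" "\<mu> E \<le> K * P E" using mu_nonneg mu_le by auto
      then show "\<bar>approx_lim E - \<mu> E\<bar> \<le> K * P E" using approx_lim_bounds[OF E] by (simp add: abs_le_iff)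
    qed
  qed
  moreover obtain N where N: "\<forall>s\<ge>N. \<forall>t\<ge>N. \<forall>E\<in>S. \<bar>approx \<mu> t E - approx \<mu> s E\<bar> \<le> \<gamma>"
    using approx_uniformly_cauchy[OF \<gamma>] by blast
  have "\<bar>approx \<mu> t E - approx_lim E\<bar> \<le> \<gamma>" if "N \<le> t" "E \<in> S" for t E
  proof -
    have "(\<lambda>s. \<bar>approx \<mu> t E - approx \<mu> s E\<bar>) \<longlonglongrightarrow> \<bar>approx \<mu> t E - approx_lim E\<bar>"
      by (intro tendsto_intros approx_tendsto that(2))
    then show ?thesis by (rule LIMSEQ_le_const2) (use N that in auto)
  qed
  ultimately show ?thesis by (intro exI[of _ N]) auto
qed

end

subsection \<open>Absolutely continuous probabilities are nearly dominated\<close>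

context cyl_prob
begin

text \<open>Q \<ll> P forces Q to vanish on P-null sets (take a constant sequence).\<close>

lemma abs_cont_null: "abs_cont S Q P \<Longrightarrow> E \<in> S \<Longrightarrow> P E = 0 \<Longrightarrow> Q E = 0"
  unfolding abs_cont_def by (drule spec[of _ "\<lambda>_. E"]) (simp add: LIMSEQ_const_iff)

lemma abs_cont_uniform:
  assumes fQ: "fap S Q" and ac: "abs_cont S Q P" and \<gamma>: "0 < \<gamma>"
  shows "\<exists>K\<ge>0. \<forall>B\<in>S. Q B - K * P B \<le> \<gamma>"
proof (rule ccontr)
  assume "\<not> ?thesis"
  then have "\<forall>n. \<exists>B. B \<in> S \<and> \<gamma> < Q B - real (Suc n) * P B"
    by (metis not_le of_nat_0_le_iff)
  then obtain B where B: "\<And>n. B n \<in> S" "\<And>n. \<gamma> < Q (B n) - real (Suc n) * P (B n)" by metis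
  have "P (B n) \<le> inverse (real (Suc n))" for n
  proof -
    have "real (Suc n) * P (B n) \<le> 1" using B(2)[of n] fap_le_1[OF fQ, of "B n"] \<gamma> by linarith
    then show ?thesis by (simp add: field_simps)
  qed
  then have "(\<lambda>n. P (B n)) \<longlonglongrightarrow> 0"
    using fap_nonneg[OF fap_P]
    by (intro tendsto_sandwich[OF _ _ tendsto_const LIMSEQ_inverse_real_of_nat]) auto
  then have "(\<lambda>n. Q (B n)) \<longlonglongrightarrow> 0" using ac B(1) unfolding abs_cont_def by blast
  moreover have "\<gamma> \<le> Q (B n)" for n
    using B(2)[of n] fap_nonneg[OF fap_P, of "B n"] by (smt (verit) of_nat_0_le_iff mult_nonneg_nonneg)
  ultimately have "\<gamma> \<le> 0" by (intro LIMSEQ_le_const) auto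
  then show False using \<gamma> by simp
qed

end

text \<open>The gain of Q over K P on B is Q(B) - K P(B); the excess on E is the largest gain on
  a subset of E.  Both are charges, and Q minus the excess is a charge between 0 and K P.\<close>

locale excess_part = cyl_prob +
  fixes Q :: "path set \<Rightarrow> real" and K :: real
  assumes fap_Q: "fap S Q" and K_nonneg: "0 \<le> K"
begin

definition gain :: "path set \<Rightarrow> real" where
  "gain B = Q B - K * P B"

definition excess :: "path set \<Rightarrow> real" where
  "excess E = (SUP B\<in>{B\<in>S. B \<subseteq> E}. gain B)"

lemma gain_charge: "charge S gain"
  unfolding gain_def by (rule charge_diff[OF fap_charge[OF fap_Q] charge_scale[OF fap_charge[OF fap_P]]])

lemma gain_le_Q: "E \<in> S \<Longrightarrow> B \<in> S \<Longrightarrow> B \<subseteq> E \<Longrightarrow> gain B \<le> Q E"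
  using fap_mono[OF fap_Q, of B E] mult_nonneg_nonneg[OF K_nonneg fap_nonneg[OF fap_P, of B]]
  by (simp add: gain_def)

lemma excess_upper: "E \<in> S \<Longrightarrow> B \<in> S \<Longrightarrow> B \<subseteq> E \<Longrightarrow> gain B \<le> excess E"
  unfolding excess_def using gain_le_Q by (intro cSUP_upper bdd_aboveI2[of _ _ "Q E"]) auto

lemma excess_least: "(\<And>B. B \<in> S \<Longrightarrow> B \<subseteq> E \<Longrightarrow> gain B \<le> c) \<Longrightarrow> excess E \<le> c"
  unfolding excess_def by (rule cSUP_least) auto

lemma excess_nonneg: "E \<in> S \<Longrightarrow> 0 \<le> excess E"
  using excess_upper[of E "{}"] charge_empty[OF gain_charge] by simp

lemma excess_le_Q: "E \<in> S \<Longrightarrow> excess E \<le> Q E"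
  using gain_le_Q by (intro excess_least) auto

text \<open>Additivity of the excess: a subset of A \<union> C splits into its parts in A and in C,
  and subsets of A and of C combine to a subset of A \<union> C.\<close>

lemma excess_charge: "charge S excess"
  unfolding charge_def
proof (intro ballI impI)
  fix A C assume A: "A \<in> S" and C: "C \<in> S" and AC: "A \<inter> C = {}"
  have split: "gain B = gain (B \<inter> A) + gain (B \<inter> C)" if B: "B \<in> S" "B \<subseteq> A \<union> C" for B
  proof -
    have "B = (B \<inter> A) \<union> (B \<inter> C)" "(B \<inter> A) \<inter> (B \<inter> C) = {}" using B AC by blast+
    then show ?thesis using chargeD[OF gain_charge, of "B \<inter> A" "B \<inter> C"] A B C by auto
  qed
  show "excess (A \<union> C) = excess A + excess C"
  proof (rule antisym)
    show "excess (A \<union> C) \<le> excess A + excess C"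
    proof (rule excess_least)
      fix B assume B: "B \<in> S" "B \<subseteq> A \<union> C"
      have "gain (B \<inter> A) \<le> excess A" "gain (B \<inter> C) \<le> excess C"
        using excess_upper A C B(1) by auto
      then show "gain B \<le> excess A + excess C" using split[OF B] by simp
    qed
  next
    have "excess A \<le> excess (A \<union> C) - excess C"
    proof (rule excess_least)
      fix B1 assume B1: "B1 \<in> S" "B1 \<subseteq> A"
      have "excess C \<le> excess (A \<union> C) - gain B1"
      proof (rule excess_least)
        fix B2 assume B2: "B2 \<in> S" "B2 \<subseteq> C"
        have U: "B1 \<union> B2 \<in> S" "B1 \<union> B2 \<subseteq> A \<union> C" using B1 B2 by auto
        have "(B1 \<union> B2) \<inter> A = B1" "(B1 \<union> B2) \<inter> C = B2" using B1 B2 AC by auto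
        then have "gain (B1 \<union> B2) = gain B1 + gain B2" using split[OF U] by simp
        moreover have "gain (B1 \<union> B2) \<le> excess (A \<union> C)" using excess_upper[OF _ U] A C by auto
        ultimately show "gain B2 \<le> excess (A \<union> C) - gain B1" by simp
      qed
      then show "gain B1 \<le> excess (A \<union> C) - excess C" by simp
    qed
    then show "excess A + excess C \<le> excess (A \<union> C)" by simp
  qed
qed

lemma dominated_part: "dominated S P (\<lambda>E. Q E - excess E) K"
proof unfold_locales
  show "charge S (\<lambda>E. Q E - excess E)" by (rule charge_diff[OF fap_charge[OF fap_Q] excess_charge])
  show "\<forall>E\<in>S. 0 \<le> Q E - excess E" using excess_le_Q by simp
  show "\<forall>E\<in>S. Q E - excess E \<le> K * P E"
  proof
    fix E assume "E \<in> S"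
    then show "Q E - excess E \<le> K * P E" using excess_upper[of E E] by (simp add: gain_def)
  qed
qed

end

subsection \<open>(1) implies (2)\<close>

context cyl_prob
begin

lemma approx_uniform_conv_abs_cont:
  assumes ext: "extreme_point (EP S P) P" and fQ: "fap S Q" and ac: "abs_cont S Q P" and \<gamma>: "0 < \<gamma>"
  shows "\<exists>N. \<forall>t\<ge>N. \<forall>E\<in>S. \<bar>approx Q t E - Q E\<bar> \<le> \<gamma>"
proof -
  obtain K where K: "0 \<le> K" "\<forall>B\<in>S. Q B - K * P B \<le> \<gamma> / 2"
    using abs_cont_uniform[OF fQ ac, of "\<gamma> / 2"] \<gamma> by auto
  interpret excess_part S P Q K by unfold_locales (rule fQ, rule K(1))
  interpret main: dominated S P "\<lambda>E. Q E - excess E" K by (rule dominated_part)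
  obtain N where N: "\<forall>t\<ge>N. \<forall>E\<in>S. \<bar>approx (\<lambda>E. Q E - excess E) t E - (Q E - excess E)\<bar> \<le> \<gamma> / 2"
    using main.approx_uniform_conv[OF ext, of "\<gamma> / 2"] \<gamma> by auto
  have small: "excess UNIV \<le> \<gamma> / 2" using K(2) by (intro excess_least) (auto simp: gain_def)
  have "\<bar>approx Q t E - Q E\<bar> \<le> \<gamma>" if "N \<le> t" "E \<in> S" for t E
  proof -
    have "approx Q t E = approx (\<lambda>E. Q E - excess E) t E + approx excess t E"
      using approx_add[of "\<lambda>E. Q E - excess E" excess t E] by simp
    moreover have "0 \<le> approx excess t E" "approx excess t E \<le> \<gamma> / 2"
      using approx_nonneg_bounds[OF excess_charge _ that(2), of t] excess_nonneg small by auto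
    moreover have "0 \<le> excess E" "excess E \<le> \<gamma> / 2"
      using excess_nonneg[OF that(2)] excess_least[of E "\<gamma> / 2"] K(2) by (auto simp: gain_def)
    moreover have "\<bar>approx (\<lambda>E. Q E - excess E) t E - (Q E - excess E)\<bar> \<le> \<gamma> / 2"
      using N that by blast
    ultimately show ?thesis unfolding abs_le_iff by linarith
  qed
  then show ?thesis by blast
qed

lemma disagree_witness:
  assumes fQ: "fap S Q" and ac: "abs_cont S Q P" and r: "r \<in> level t"
    and dis: "disagree S P Q \<epsilon> (cyl r t)"
  shows "\<exists>E\<in>S. \<epsilon> * Q (cyl r t) < \<bar>approx Q t (E \<inter> cyl r t) - Q (E \<inter> cyl r t)\<bar>"
proof -
  define c where "c = cyl r t"
  have Qc: "0 < Q c" using dis by (simp add: disagree_def c_def)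
  then have "P c \<noteq> 0" using abs_cont_null[OF ac, of c] by (auto simp: c_def)
  then have "\<epsilon> < cond_gap S P Q c" using dis by (simp add: disagree_def c_def)
  moreover have "c \<in> S" by (simp add: c_def)
  ultimately obtain E where E: "E \<in> S" "\<epsilon> < \<bar>P (E \<inter> c) / P c - Q (E \<inter> c) / Q c\<bar>"
    using cond_gap_witness[OF fap_P fQ] by blast
  have "approx Q t (E \<inter> c) - Q (E \<inter> c) = Q c * (P (E \<inter> c) / P c - Q (E \<inter> c) / Q c)"
    using approx_in_cyl[OF r, of Q E] Qc by (simp add: c_def field_simps)
  then have "\<bar>approx Q t (E \<inter> c) - Q (E \<inter> c)\<bar> = Q c * \<bar>P (E \<inter> c) / P c - Q (E \<inter> c) / Q c\<bar>"
    using Qc by (simp add: abs_mult)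
  moreover have "\<epsilon> * Q c < Q c * \<bar>P (E \<inter> c) / P c - Q (E \<inter> c) / Q c\<bar>"
    using E(2) Qc by (simp add: mult.commute)
  ultimately have "\<epsilon> * Q c < \<bar>approx Q t (E \<inter> c) - Q (E \<inter> c)\<bar>" by simp
  then show ?thesis using E(1) unfolding c_def by blast
qed

lemma disagree_mass_bound:
  assumes fQ: "fap S Q" and ac: "abs_cont S Q P" and close: "\<forall>E\<in>S. \<bar>approx Q t E - Q E\<bar> \<le> \<gamma>"
  shows "\<epsilon> * Q {w. disagree S P Q \<epsilon> (cyl w t)} \<le> 2 * \<gamma>"
proof -
  define G where "G = {r\<in>level t. disagree S P Q \<epsilon> (cyl r t)}"
  define \<nu> where "\<nu> E = approx Q t E - Q E" for E
  have "\<forall>r\<in>G. \<exists>E\<in>S. \<epsilon> * Q (cyl r t) < \<bar>\<nu> (E \<inter> cyl r t)\<bar>"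
    using disagree_witness[OF fQ ac, of _ t \<epsilon>] by (simp add: G_def \<nu>_def)
  then obtain W where W: "\<And>r. r \<in> G \<Longrightarrow> W r \<in> S \<and> \<epsilon> * Q (cyl r t) < \<bar>\<nu> (W r \<inter> cyl r t)\<bar>"
    by (metis bchoice)
  have "\<epsilon> * Q {w. disagree S P Q \<epsilon> (cyl w t)} = (\<Sum>r\<in>G. \<epsilon> * Q (cyl r t))"
    using charge_cyl_determined[OF fap_charge[OF fQ]] by (simp add: G_def sum_distrib_left)
  also have "\<dots> \<le> (\<Sum>r\<in>G. \<bar>\<nu> (W r \<inter> cyl r t)\<bar>)"
    using W by (intro sum_mono) (simp add: less_imp_le)
  also have "\<dots> \<le> 2 * \<gamma>"
  proof (rule charge_abs_sum_le)
    show "charge S \<nu>" unfolding \<nu>_def by (rule charge_diff[OF approx_charge fap_charge[OF fQ]])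
    show "\<forall>B\<in>S. \<bar>\<nu> B\<bar> \<le> \<gamma>" using close by (simp add: \<nu>_def)
    show "finite G" using finite_level by (simp add: G_def)
    show "W r \<inter> cyl r t \<in> S" if "r \<in> G" for r using W[OF that] by auto
    show "disjoint_family_on (\<lambda>r. W r \<inter> cyl r t) G"
      using disjoint_family_level_cyls[of W t] by (rule disjoint_family_on_mono[rotated]) (simp add: G_def)
  qed
  finally show ?thesis .
qed

text \<open>(1) implies (2): given eps and a target e, approximate Q uniformly within e eps / 4;
  then the disagreement cylinders have Q-mass at most e / 2.\<close>

lemma extreme_imp_blackwell_dubins:
  assumes ext: "extreme_point (EP S P) P"
  shows "blackwell_dubins S P"
  unfolding blackwell_dubins_def merges_iff_disagree
proof (intro allI impI)
  fix Q and \<epsilon> :: real assume fQ: "fap S Q" and ac: "abs_cont S Q P" and \<epsilon>: "0 < \<epsilon>"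
  show "(\<lambda>t. Q {w. disagree S P Q \<epsilon> (cyl w t)}) \<longlonglongrightarrow> 0"
  proof (rule LIMSEQ_I)
    fix e :: real assume e: "0 < e"
    obtain N where N: "\<forall>t\<ge>N. \<forall>E\<in>S. \<bar>approx Q t E - Q E\<bar> \<le> e * \<epsilon> / 4"
      using approx_uniform_conv_abs_cont[OF ext fQ ac, of "e * \<epsilon> / 4"] e \<epsilon> by auto
    have "norm (Q {w. disagree S P Q \<epsilon> (cyl w t)} - 0) < e" if "N \<le> t" for t
    proof -
      have "\<epsilon> * Q {w. disagree S P Q \<epsilon> (cyl w t)} \<le> \<epsilon> * (e / 2)"
        using disagree_mass_bound[OF fQ ac, of t "e * \<epsilon> / 4" \<epsilon>] N that by simp
      then have "Q {w. disagree S P Q \<epsilon> (cyl w t)} \<le> e / 2" using \<epsilon> by simp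
      then show ?thesis using fap_nonneg[OF fQ] e by simp
    qed
    then show "\<exists>N. \<forall>t\<ge>N. norm (Q {w. disagree S P Q \<epsilon> (cyl w t)} - 0) < e" by blast
  qed
qed

end

theorem theorem8:
  fixes S :: "path set set" and P :: "path set \<Rightarrow> real"
  assumes "sigma_algebra UNIV S"
    and "cylinders \<subseteq> S"
    and "fap S P"
  shows "(extreme_point (EP S P) P \<longleftrightarrow> blackwell_dubins S P)
       \<and> (blackwell_dubins S P \<longleftrightarrow>
           (\<forall>Q R. \<forall>\<alpha>::real. fap S Q \<longrightarrow> fap S R \<longrightarrow> 0 < \<alpha> \<longrightarrow> \<alpha> < 1 \<longrightarrow>
              P = (\<lambda>E. \<alpha> * Q E + (1 - \<alpha>) * R E) \<longrightarrow> merges S P Q \<and> merges S P R))"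
proof -
  interpret cyl_prob S P by (intro cyl_prob.intro cyl_sigma.intro cyl_prob_axioms.intro assms)
  have "extreme_point (EP S P) P \<Longrightarrow> blackwell_dubins S P"
    by (rule extreme_imp_blackwell_dubins)
  moreover have "blackwell_dubins S P \<Longrightarrow>
      (\<forall>Q R. \<forall>\<alpha>::real. fap S Q \<longrightarrow> fap S R \<longrightarrow> 0 < \<alpha> \<longrightarrow> \<alpha> < 1 \<longrightarrow>
         P = (\<lambda>E. \<alpha> * Q E + (1 - \<alpha>) * R E) \<longrightarrow> merges S P Q \<and> merges S P R)"
    using blackwell_dubins_imp_mixture_merging by blast
  moreover note mixture_merging_imp_extreme
  ultimately show ?thesis by blast
qed

end
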